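(* Let $N=p^nN_1$ with $n\ge2$, $p\ge3$ prime, and $N_1=q_1q_2\cdots q_r$ where $q_1,\dots,q_r$ are distinct primes, different from $p$, with $p-1\equiv0\pmod{q_i-1}$ for all $i$. Let $u$ be an integer with $\gcd(u,N)=1$, and let $d,m\in\mathbb{Z}_N$. Define $h_d(k)=\big((k+d)^p-k^p-d^p\big)m+udk$. Then $h_d(k)/\gcd(d,N)$ is a permutation polynomial over $\mathbb{Z}_{N/\gcd(d,N)}$.
   Context: A polynomial $g$ (integer-valued) is a permutation polynomial over $\mathbb{Z}_M$ if $k\mapsto g(k)\bmod M$ is a bijection of $\mathbb{Z}_M=\{0,\dots,M-1\}$; $\gcd(0,N)=N$. *)

theory Defs
  imports "HOL-Computational_Algebra.Primes"
begin

definition perm_poly_mod :: "int \<Rightarrow> (int \<Rightarrow> int) \<Rightarrow> bool" where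
  "perm_poly_mod M g \<longleftrightarrow> bij_betw (\<lambda>k. g k mod M) {0..<M} {0..<M}"

definition h_poly :: "int \<Rightarrow> int \<Rightarrow> nat \<Rightarrow> int \<Rightarrow> int \<Rightarrow> int" where
  "h_poly m u p d k = ((k + d) ^ p - k ^ p - d ^ p) * m + u * d * k"

end

(*
  Write g = gcd d N and M = N div g. Since d divides h_d(k), it suffices to show that
  h_d(a) = h_d(b) (mod N) forces a = b (mod M), which is checked one prime power of M at a time.
  Binomial expansion gives h_d(a) - h_d(b) = d (a - b) (u + p T m) for some T, and
  u + p T m is prime to p because u is; this settles the p-part of M. Any other prime q
  dividing M divides N only once, hence does not divide d; and k^p = k (mod q) by Fermat,
  because q - 1 divides p - 1, so h_d(k) = u d k (mod q) and q divides a - b.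
*)

theory Submission
  imports Defs "HOL-Number_Theory.Number_Theory" "HOL-Computational_Algebra.Squarefree"
begin

lemma binomial_difference_dvd:
  fixes a b d :: "'a::comm_ring_1" and p :: nat
  assumes "prime p"
  shows "d * of_nat p * (a - b) dvd
           ((a + d) ^ p - a ^ p - d ^ p) - ((b + d) ^ p - b ^ p - d ^ p)"
proof -
  let ?t = "\<lambda>k. of_nat (p choose k) * (a ^ k - b ^ k) * d ^ (p - k)"
  have "(a + d) ^ p - (b + d) ^ p = (\<Sum>k\<le>p. ?t k)"
    by (simp add: binomial_ring sum_subtractf[symmetric] algebra_simps)
  also have "\<dots> = (\<Sum>k<p. ?t k) + (a ^ p - b ^ p)"
    by (simp add: lessThan_Suc_atMost[symmetric])
  finally have expand: "((a + d) ^ p - a ^ p - d ^ p) - ((b + d) ^ p - b ^ p - d ^ p) = (\<Sum>k<p. ?t k)"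
    by (simp add: algebra_simps)
  have "d * of_nat p * (a - b) dvd ?t k" if "k < p" for k
  proof (cases "k = 0")
    case False
    have "p dvd (p choose k)"
      using dvd_choose_prime[of k p] False that assms by (simp add: prime_gt_0_nat)
    then have "of_nat p dvd (of_nat (p choose k) :: 'a)"
      by (metis dvd_def of_nat_mult)
    moreover have "a - b dvd a ^ k - b ^ k"
      by (simp add: power_diff_sumr2)
    moreover have "d dvd d ^ (p - k)"
      using that by simp
    ultimately have "of_nat p * (a - b) * d dvd ?t k"
      by (intro mult_dvd_mono)
    then show ?thesis
      by (simp add: ac_simps)
  qed simp
  then show ?thesis
    unfolding expand by (auto intro: dvd_sum)
qed

lemma fermat_cong_power:
  fixes q p x :: nat
  assumes "prime q" "(q - 1) dvd (p - 1)" "p > 0"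
  shows "[x ^ p = x] (mod q)"
proof (cases "q dvd x")
  case True
  then have "q dvd x ^ p"
    using assms(3) dvd_trans[OF True dvd_power[of p x]] by simp
  then show ?thesis
    using True by (simp add: cong_def dvd_eq_mod_eq_0)
next
  case False
  obtain j where "p - 1 = (q - 1) * j"
    using assms(2) by blast
  then have p_eq: "p = Suc ((q - 1) * j)"
    using assms(3) by simp
  have "[(x ^ (q - 1)) ^ j = 1 ^ j] (mod q)"
    by (rule cong_pow[OF fermat_theorem[OF assms(1) False]])
  then have "[x * (x ^ (q - 1)) ^ j = x * 1 ^ j] (mod q)"
    by (rule cong_mult[OF cong_refl])
  then show ?thesis
    by (simp add: p_eq power_mult)
qed

lemma fermat_cong_power_int:
  fixes q p :: nat and k :: int
  assumes "prime q" "(q - 1) dvd (p - 1)" "p > 0"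
  shows "[k ^ p = k] (mod int q)"
proof -
  define x where "x = nat (k mod int q)"
  have k_cong: "[k = int x] (mod int q)"
    using assms(1) by (simp add: x_def cong_def prime_gt_0_nat)
  then have "[k ^ p = int x ^ p] (mod int q)"
    by (rule cong_pow)
  also have "[int x ^ p = int x] (mod int q)"
    using fermat_cong_power[OF assms, of x] by (simp flip: cong_int_iff)
  also have "[int x = k] (mod int q)"
    using k_cong by (rule cong_sym)
  finally show ?thesis .
qed

lemma dvd_if_prime_power_dvd:
  fixes M x :: "'a::factorial_semiring"
  assumes "M \<noteq> 0" "\<And>r k. prime r \<Longrightarrow> r ^ k dvd M \<Longrightarrow> r ^ k dvd x"
  shows "M dvd x"
proof (cases "x = 0")
  case False
  show ?thesis
  proof (rule multiplicity_le_imp_dvd[OF assms(1)])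
    fix r :: 'a assume "prime r"
    then show "multiplicity r M \<le> multiplicity r x"
      using assms(2) False by (intro multiplicity_geI) (auto simp: multiplicity_dvd)
  qed
qed simp

lemma div_gcd_dvd_if_dvd_mult:
  fixes N d x :: "'a::semiring_gcd"
  assumes "N \<noteq> 0" "N dvd d * x"
  shows "N div gcd d N dvd x"
proof -
  define g where "g = gcd d N"
  have "g \<noteq> 0"
    using assms(1) by (simp add: g_def)
  moreover have "g * (N div g) dvd g * ((d div g) * x)"
    using assms(2) by (simp add: g_def flip: mult.assoc)
  ultimately have "N div g dvd (d div g) * x"
    by simp
  moreover have "coprime (N div g) (d div g)"
    using div_gcd_coprime[of d N] assms(1) by (simp add: g_def coprime_commute)
  ultimately show ?thesis
    by (simp add: g_def coprime_dvd_mult_right_iff)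
qed

lemma prime_dvd_power_mult_prod_primes:
  fixes p q n :: nat and Q :: "nat set"
  assumes "prime p" "finite Q" "\<forall>q\<in>Q. prime q"
    and "prime q" "q \<noteq> p" "q dvd p ^ n * \<Prod>Q"
  shows "q \<in> Q \<and> \<not> q ^ 2 dvd p ^ n * \<Prod>Q"
proof
  have "coprime q p"
    using assms by (simp add: primes_coprime)
  then have coprime_power: "coprime (q ^ k) (p ^ n)" for k
    by simp
  then have "q dvd \<Prod>Q"
    using assms(6) coprime_power[of 1] by (simp add: coprime_dvd_mult_right_iff)
  then obtain q' where "q' \<in> Q" "q dvd q'"
    using prime_dvd_prod_iff[of Q q id] assms(2,4) by auto
  then show "q \<in> Q"
    using assms(3,4) primes_dvd_imp_eq by blast
  have "squarefree (\<Prod>Q)"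
    using assms(3) by (intro squarefree_prod_coprime) (auto simp: primes_coprime squarefree_prime)
  moreover have "\<not> q dvd 1"
    using assms(4) not_prime_unit by blast
  ultimately show "\<not> q ^ 2 dvd p ^ n * \<Prod>Q"
    using coprime_power[of 2] by (auto simp: coprime_dvd_mult_right_iff dest: squarefreeD)
qed

lemma perm_poly_modI:
  assumes "M > 0" "\<And>a b. [f a = f b] (mod M) \<Longrightarrow> [a = b] (mod M)"
  shows "perm_poly_mod M f"
proof -
  have inj: "inj_on (\<lambda>k. f k mod M) {0..<M}"
  proof (rule inj_onI)
    fix a b assume "a \<in> {0..<M}" "b \<in> {0..<M}" "f a mod M = f b mod M"
    then have "a mod M = b mod M"
      using assms(2)[of a b] by (simp add: cong_def)
    then show "a = b"
      using \<open>a \<in> {0..<M}\<close> \<open>b \<in> {0..<M}\<close> by simp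
  qed
  moreover have "(\<lambda>k. f k mod M) ` {0..<M} \<subseteq> {0..<M}"
    using assms(1) by auto
  ultimately show ?thesis
    unfolding perm_poly_mod_def bij_betw_def by (simp add: endo_inj_surj)
qed

lemma dvd_h_poly:
  assumes "p > 0"
  shows "d dvd h_poly m u p d k"
proof -
  have "d dvd (k + d) ^ p - k ^ p"
    using power_diff_sumr2[of "k + d" p k] by simp
  moreover have "d dvd d ^ p"
    using assms by simp
  ultimately have "d dvd (k + d) ^ p - k ^ p - d ^ p"
    by (rule dvd_diff)
  then have "d dvd ((k + d) ^ p - k ^ p - d ^ p) * m"
    by (rule dvd_mult2)
  then show ?thesis
    unfolding h_poly_def by simp
qed

lemma h_poly_diff_eq:
  assumes "prime p"
  obtains T where
    "h_poly m u p d a - h_poly m u p d b = d * (a - b) * (u + int p * T * m)"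
proof -
  obtain T where T: "((a + d) ^ p - a ^ p - d ^ p) - ((b + d) ^ p - b ^ p - d ^ p) = d * int p * (a - b) * T"
    using binomial_difference_dvd[OF assms, of d a b] by (elim dvdE)
  have "h_poly m u p d a - h_poly m u p d b =
      (((a + d) ^ p - a ^ p - d ^ p) - ((b + d) ^ p - b ^ p - d ^ p)) * m + u * d * (a - b)"
    unfolding h_poly_def by (simp add: algebra_simps)
  also have "\<dots> = d * (a - b) * (u + int p * T * m)"
    unfolding T by (simp add: algebra_simps)
  finally show ?thesis
    by (rule that)
qed

lemma h_poly_cong_linear:
  assumes "\<And>k. [k ^ p = k] (mod r)"
  shows "[h_poly m u p d k = u * d * k] (mod r)"
proof -
  have "[(k + d) ^ p - k ^ p - d ^ p = (k + d) - k - d] (mod r)"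
    using assms by (intro cong_diff)
  then have "[((k + d) ^ p - k ^ p - d ^ p) * m + u * d * k = 0 * m + u * d * k] (mod r)"
    by (intro cong_add cong_mult) simp_all
  then show ?thesis
    unfolding h_poly_def by simp
qed

lemma prime_dvd_diff_if_h_poly_cong:
  fixes N r u d m a b :: int
  assumes "prime r" "r dvd N div gcd d N" "\<not> r ^ 2 dvd N" "coprime u N"
    and fermat: "\<And>k. [k ^ p = k] (mod r)"
    and cong: "[h_poly m u p d a = h_poly m u p d b] (mod N)"
  shows "r dvd a - b"
proof -
  have N_eq: "N = gcd d N * (N div gcd d N)"
    by simp
  have rN: "r dvd N"
    using assms(2) by (subst N_eq) (rule dvd_mult)
  have "\<not> r dvd d"
  proof
    assume "r dvd d"
    then have "r dvd gcd d N"
      using rN by simp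
    then have "r * r dvd N"
      using assms(2) by (subst N_eq) (rule mult_dvd_mono)
    then show False
      using assms(3) by (simp add: power2_eq_square)
  qed
  moreover have "\<not> r dvd u"
    using coprime_common_divisor[OF assms(4) _ rN] assms(1) by auto
  moreover have "[u * d * a = u * d * b] (mod r)"
  proof -
    have "[u * d * a = h_poly m u p d a] (mod r)"
      using h_poly_cong_linear[OF fermat] by (rule cong_sym)
    also have "[h_poly m u p d a = h_poly m u p d b] (mod r)"
      using cong rN by (rule cong_dvd_modulus)
    also have "[h_poly m u p d b = u * d * b] (mod r)"
      by (rule h_poly_cong_linear[OF fermat])
    finally show ?thesis .
  qed
  ultimately show ?thesis
    using assms(1) by (simp add: cong_iff_dvd_diff prime_dvd_mult_iff flip: right_diff_distrib)
qed

lemma cong_div_gcd_if_h_poly_cong: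
  fixes N u d m a b :: int and p :: nat
  assumes "prime p" "N > 0" "coprime u N"
    and prime_divisors: "\<And>r. prime r \<Longrightarrow> r dvd N \<Longrightarrow> r \<noteq> int p \<Longrightarrow>
                                \<not> r ^ 2 dvd N \<and> (\<forall>k. [k ^ p = k] (mod r))"
    and cong: "[h_poly m u p d a = h_poly m u p d b] (mod N)"
  shows "[a = b] (mod N div gcd d N)"
proof -
  define M where "M = N div gcd d N"
  have N_eq: "N = gcd d N * M"
    by (simp add: M_def)
  obtain T where diff: "h_poly m u p d a - h_poly m u p d b = d * (a - b) * (u + int p * T * m)"
    by (rule h_poly_diff_eq[OF assms(1)])
  define W where "W = u + int p * T * m"
  have "N dvd d * ((a - b) * W)"
    using cong diff by (simp add: W_def cong_iff_dvd_diff mult.assoc)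
  then have MW: "M dvd (a - b) * W"
    unfolding M_def using assms(2) by (intro div_gcd_dvd_if_dvd_mult) simp_all
  have "M dvd a - b"
  proof (rule dvd_if_prime_power_dvd)
    show "M \<noteq> 0"
      using assms(2) N_eq by auto
  next
    fix r :: int and k :: nat
    assume r: "prime r" and rk: "r ^ k dvd M"
    show "r ^ k dvd a - b"
    proof (cases "k = 0")
      case False
      then have rM: "r dvd M"
        using dvd_trans[OF dvd_power[of k r] rk] by simp
      then have rN: "r dvd N"
        by (subst N_eq) simp
      show ?thesis
      proof (cases "r = int p")
        case True
        have "\<not> r dvd u"
          using coprime_common_divisor[OF assms(3) _ rN] r by auto
        then have "coprime (r ^ k) W"
          using r True by (simp add: W_def prime_imp_coprime dvd_add_left_iff mult.assoc)
        then show ?thesis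
          using dvd_trans[OF rk MW] by (simp add: coprime_dvd_mult_left_iff)
      next
        case False
        with prime_divisors[OF r rN] have squarefree: "\<not> r ^ 2 dvd N"
          and fermat: "\<And>k. [k ^ p = k] (mod r)" by auto
        have "\<not> r ^ 2 dvd M"
          using squarefree by (subst (asm) N_eq) auto
        then have "\<not> 2 \<le> k"
          using dvd_trans[OF le_imp_power_dvd[of 2 k r] rk] by blast
        with \<open>k \<noteq> 0\<close> have "k = 1"
          by simp
        then show ?thesis
          using prime_dvd_diff_if_h_poly_cong[OF r _ squarefree assms(3) fermat cong] rM
          by (simp add: M_def)
      qed
    qed simp
  qed
  then show ?thesis
    by (simp add: M_def cong_iff_dvd_diff)
qed

lemma perm_poly_mod_h_poly_div_gcd:
  fixes N u d m :: int and p :: nat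
  assumes "prime p" "N > 0" "coprime u N"
    and "\<And>r. prime r \<Longrightarrow> r dvd N \<Longrightarrow> r \<noteq> int p \<Longrightarrow>
                \<not> r ^ 2 dvd N \<and> (\<forall>k. [k ^ p = k] (mod r))"
  shows "perm_poly_mod (N div gcd d N) (\<lambda>k. h_poly m u p d k div gcd d N)"
proof (rule perm_poly_modI)
  let ?g = "gcd d N"
  show "N div ?g > 0"
    using assms(2) by (simp add: pos_imp_zdiv_pos_iff zdvd_imp_le)
  have h_eq: "?g * (h_poly m u p d k div ?g) = h_poly m u p d k" for k
    using dvd_trans[OF gcd_dvd1 dvd_h_poly] assms(1) by (simp add: prime_gt_0_nat)
  fix a b
  assume "[h_poly m u p d a div ?g = h_poly m u p d b div ?g] (mod N div ?g)"
  then have "[?g * (h_poly m u p d a div ?g) = ?g * (h_poly m u p d b div ?g)] (mod ?g * (N div ?g))"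
    by (rule cong_cmult_leftI)
  then have "[h_poly m u p d a = h_poly m u p d b] (mod N)"
    by (simp only: h_eq) simp
  then show "[a = b] (mod N div ?g)"
    using cong_div_gcd_if_h_poly_cong[OF assms(1-3)] assms(4) by blast
qed

theorem lemma11:
  fixes p n :: nat and Q :: "nat set" and N u d m :: int
  assumes "prime p" and "p \<ge> 3" and "n \<ge> 2"
    and "finite Q" and "\<forall>q\<in>Q. prime q" and "p \<notin> Q"
    and "\<forall>q\<in>Q. (q - 1) dvd (p - 1)"
    and "N = int p ^ n * int (\<Prod>Q)"
    and "gcd u N = 1"
    and "d \<in> {0..<N}" and "m \<in> {0..<N}"
  shows "perm_poly_mod (N div gcd d N) (\<lambda>k. h_poly m u p d k div gcd d N)"
proof -
  have "N > 0"
    using assms(1,4,5,8) by (simp add: prime_gt_0_nat prod_pos)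
  moreover have "coprime u N"
    using assms(9) by (simp add: coprime_iff_gcd_eq_1)
  moreover have "\<not> r ^ 2 dvd N \<and> (\<forall>k. [k ^ p = k] (mod r))"
    if r: "prime r" "r dvd N" "r \<noteq> int p" for r :: int
  proof -
    obtain q where q: "r = int q"
      using prime_ge_0_int[OF r(1)] nonneg_int_cases by metis
    have N_eq: "N = int (p ^ n * \<Prod>Q)"
      using assms(8) by simp
    have q_prime: "prime q" and "q \<noteq> p" "q dvd p ^ n * \<Prod>Q"
      using r unfolding q N_eq by (auto simp only: prime_nat_int_transfer of_nat_dvd_iff of_nat_eq_iff)
    then have "q \<in> Q" "\<not> q ^ 2 dvd p ^ n * \<Prod>Q"
      using prime_dvd_power_mult_prod_primes[OF assms(1,4,5)] by blast+
    moreover have "r ^ 2 dvd N \<longleftrightarrow> q ^ 2 dvd p ^ n * \<Prod>Q"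
      unfolding q N_eq by (simp only: of_nat_dvd_iff flip: of_nat_power)
    ultimately show ?thesis
      using fermat_cong_power_int[OF q_prime] assms(1,7) by (simp add: q prime_gt_0_nat)
  qed
  ultimately show ?thesis
    using perm_poly_mod_h_poly_div_gcd[OF assms(1)] by blast
qed

end
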